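(* Let $\zeta$ be a nonconstant (holomorphic or formal) curve with $\zeta(0)=0$, let $\nu=\nu(\zeta)$ and let $k\geq 1$ be an integer. If $j_{2k\nu}(\zeta^*r)=0$, then there is a unitary infinite matrix $U_k\in\mathcal M_1$ (indeed $U_k\in\mathcal M_{1,N}$ for some $N$) such that $j_{2k\nu}(\zeta^*h)=0$ and $j_{k\nu}(\zeta^*(f-U_kg))=0$ (componentwise).
   Context: $r$ is a real $\mathcal C^\infty$ defining function of a hypersurface through $0\in\mathbb C^n$ ($r(0)=0$, $dr(0)\ne0$). Order the nonzero multi-indices $J\in\mathbb N^n$ by $J<K$ iff $|J|<|K|$, or $|J|=|K|$ and $J$ precedes $K$ lexicographically; enumerate them increasingly as $J^{(1)},J^{(2)},\dots$. Write the formal Taylor series of $r$ at $0$ as $r\sim 2\,\mathrm{Re}\,h+4\,\mathrm{Re}\sum_{J}\sum_{K\ge J}a_{JK}z^J\bar z^K$ ($J,K$ nonzero), with $h$ a formal holomorphic power series, $h(0)=0$, $a_{JK}\in\mathbb C$. Set $f_J=z^J+\sum_{K\ge J}\overline{a_{JK}}z^K$, $g_J=z^J-\sum_{K\ge J}\overline{a_{JK}}z^K$; then formally $r\sim 2\,\mathrm{Re}\,h+\sum_J|f_J|^2-\sum_J|g_J|^2$, and $f=(f_{J^{(m)}})_{m\ge1}$, $g=(g_{J^{(m)}})_{m\ge1}$ are viewed as infinite column vectors. For a formal power series $\varphi$ in $t,\bar t$ (or in $t$), $j_m(\varphi)$ is its truncation to terms of total degree $\le m$; $\zeta^*\varphi=\varphi\circ\zeta$.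 $\nu(\zeta)$ is the order of vanishing of $\zeta$ at $0$. $\mathcal M$ is the set of infinite complex matrices $\{a_{ij}\}_{i,j\ge1}$, products defined by $c_{i\ell}=\sum_k a_{ik}b_{k\ell}$ when convergent; $A^*=\{\overline{a_{ji}}\}$; $\mathcal M_1$ is the set of unitary ones ($AA^*=A^*A=I$); $\mathcal M_{1,N}\subset\mathcal M_1$ consists of those with $a_{ij}=\delta_{ij}$ whenever $\max\{i,j\}>N$. For $U\in\mathcal M_1$, $(Ug)_i=\sum_m U_{im}g_m$. *)

theory Defs
  imports "HOL-Analysis.Analysis" "HOL-Computational_Algebra.Formal_Power_Series"
begin

type_synonym mindex = "nat \<Rightarrow> nat"

definition mi :: "nat \<Rightarrow> mindex set" where
  "mi n = {J. \<forall>i. n \<le> i \<longrightarrow> J i = 0}"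

definition nzmi :: "nat \<Rightarrow> mindex set" where
  "nzmi n = {J \<in> mi n. J \<noteq> (\<lambda>_. 0)}"

definition mdeg :: "nat \<Rightarrow> mindex \<Rightarrow> nat" where
  "mdeg n J = (\<Sum>i<n. J i)"

definition lex_less :: "nat \<Rightarrow> mindex \<Rightarrow> mindex \<Rightarrow> bool" where
  "lex_less n J K \<longleftrightarrow> (\<exists>i<n. (\<forall>j<i. J j = K j) \<and> J i < K i)"

definition mi_less :: "nat \<Rightarrow> mindex \<Rightarrow> mindex \<Rightarrow> bool" where
  "mi_less n J K \<longleftrightarrow> mdeg n J < mdeg n K \<or> (mdeg n J = mdeg n K \<and> lex_less n J K)"

definition mi_le :: "nat \<Rightarrow> mindex \<Rightarrow> mindex \<Rightarrow> bool" where
  "mi_le n J K \<longleftrightarrow> J = K \<or> mi_less n J K"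

text \<open>Increasing enumeration J^(1), J^(2), ... of the nonzero multi-indices:
  J^(m) is the nonzero multi-index having exactly m-1 predecessors.\<close>
definition enum :: "nat \<Rightarrow> nat \<Rightarrow> mindex" where
  "enum n m = (THE J. J \<in> nzmi n \<and> card {K \<in> nzmi n. mi_less n K J} = m - 1)"

text \<open>A formal power series in z, zbar (n variables) is given by its coefficients:
  phi J K is the coefficient of z^J zbar^K. A formal holomorphic series is
  given by s J, the coefficient of z^J.\<close>
type_synonym biser = "mindex \<Rightarrow> mindex \<Rightarrow> complex"
type_synonym holser = "mindex \<Rightarrow> complex"

definition hol_bi :: "holser \<Rightarrow> biser" where
  "hol_bi s J K = (if K = (\<lambda>_. 0) then s J else 0)"

definition conj_bi :: "biser \<Rightarrow> biser" where
  "conj_bi \<phi> J K = cnj (\<phi> K J)"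

definition re_bi :: "biser \<Rightarrow> biser" where
  "re_bi \<phi> J K = (\<phi> J K + conj_bi \<phi> J K) / 2"

text \<open>The series sum_J sum_{K >= J} a_JK z^J zbar^K (J, K nonzero).\<close>
definition aser :: "nat \<Rightarrow> (mindex \<Rightarrow> mindex \<Rightarrow> complex) \<Rightarrow> biser" where
  "aser n a J K = (if J \<noteq> (\<lambda>_. 0) \<and> K \<noteq> (\<lambda>_. 0) \<and> mi_le n J K then a J K else 0)"

text \<open>The model 2 Re h + 4 Re sum_J sum_{K>=J} a_JK z^J zbar^K.\<close>
definition model :: "nat \<Rightarrow> holser \<Rightarrow> (mindex \<Rightarrow> mindex \<Rightarrow> complex) \<Rightarrow> biser" where
  "model n h a J K = 2 * re_bi (hol_bi h) J K + 4 * re_bi (aser n a) J K"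

text \<open>f_J = z^J + sum_{K>=J} conj(a_JK) z^K and g_J = z^J - sum_{K>=J} conj(a_JK) z^K.\<close>
definition fser :: "nat \<Rightarrow> (mindex \<Rightarrow> mindex \<Rightarrow> complex) \<Rightarrow> mindex \<Rightarrow> holser" where
  "fser n a J K = (if K = J then 1 else 0)
      + (if K \<noteq> (\<lambda>_. 0) \<and> mi_le n J K then cnj (a J K) else 0)"

definition gser :: "nat \<Rightarrow> (mindex \<Rightarrow> mindex \<Rightarrow> complex) \<Rightarrow> mindex \<Rightarrow> holser" where
  "gser n a J K = (if K = J then 1 else 0)
      - (if K \<noteq> (\<lambda>_. 0) \<and> mi_le n J K then cnj (a J K) else 0)"

definition fvec :: "nat \<Rightarrow> (mindex \<Rightarrow> mindex \<Rightarrow> complex) \<Rightarrow> nat \<Rightarrow> holser" where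
  "fvec n a m = fser n a (enum n m)"

definition gvec :: "nat \<Rightarrow> (mindex \<Rightarrow> mindex \<Rightarrow> complex) \<Rightarrow> nat \<Rightarrow> holser" where
  "gvec n a m = gser n a (enum n m)"

type_synonym imat = "nat \<Rightarrow> nat \<Rightarrow> complex"

definition adj :: "imat \<Rightarrow> imat" where
  "adj A i j = cnj (A j i)"

definition prod_entry_sums :: "imat \<Rightarrow> imat \<Rightarrow> nat \<Rightarrow> nat \<Rightarrow> complex \<Rightarrow> bool" where
  "prod_entry_sums A B i l c \<longleftrightarrow> (\<lambda>k. A i (Suc k) * B (Suc k) l) sums c"

definition M1 :: "imat set" where
  "M1 = {A. \<forall>i\<ge>1. \<forall>l\<ge>1.
      prod_entry_sums A (adj A) i l (if i = l then 1 else 0) \<and>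
      prod_entry_sums (adj A) A i l (if i = l then 1 else 0)}"

definition M1N :: "nat \<Rightarrow> imat set" where
  "M1N N = {A \<in> M1. \<forall>i\<ge>1. \<forall>j\<ge>1. max i j > N \<longrightarrow> A i j = (if i = j then 1 else 0)}"

definition matvec :: "imat \<Rightarrow> (nat \<Rightarrow> holser) \<Rightarrow> nat \<Rightarrow> holser" where
  "matvec U v i K = (\<Sum>\<^sub>\<infinity>m\<in>{1..}. U i m * v m K)"

text \<open>A formal curve zeta in C^n: components zeta i (i < n) are formal power series in t.\<close>
definition zpow :: "nat \<Rightarrow> (nat \<Rightarrow> complex fps) \<Rightarrow> mindex \<Rightarrow> complex fps" where
  "zpow n \<zeta> J = (\<Prod>i<n. \<zeta> i ^ J i)"

definition nu :: "nat \<Rightarrow> (nat \<Rightarrow> complex fps) \<Rightarrow> nat" where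
  "nu n \<zeta> = (LEAST m. \<exists>i<n. fps_nth (\<zeta> i) m \<noteq> 0)"

text \<open>Coefficient of t^p in zeta^* s. Since zeta(0) = 0, zeta^J has order >= |J|,
  so only multi-indices with |J| <= p contribute (this is the usual composition).\<close>
definition pb_hol :: "nat \<Rightarrow> (nat \<Rightarrow> complex fps) \<Rightarrow> holser \<Rightarrow> nat \<Rightarrow> complex" where
  "pb_hol n \<zeta> s p = (\<Sum>J\<in>{J \<in> mi n. mdeg n J \<le> p}. s J * fps_nth (zpow n \<zeta> J) p)"

definition pb_bi :: "nat \<Rightarrow> (nat \<Rightarrow> complex fps) \<Rightarrow> biser \<Rightarrow> nat \<Rightarrow> nat \<Rightarrow> complex" where
  "pb_bi n \<zeta> \<phi> p q = (\<Sum>J\<in>{J \<in> mi n. mdeg n J \<le> p}. \<Sum>K\<in>{K \<in> mi n. mdeg n K \<le> q}.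
      \<phi> J K * fps_nth (zpow n \<zeta> J) p * cnj (fps_nth (zpow n \<zeta> K) q))"

definition jet_bi_zero :: "nat \<Rightarrow> (nat \<Rightarrow> nat \<Rightarrow> complex) \<Rightarrow> bool" where
  "jet_bi_zero m \<psi> \<longleftrightarrow> (\<forall>p q. p + q \<le> m \<longrightarrow> \<psi> p q = 0)"

definition jet_hol_zero :: "nat \<Rightarrow> (nat \<Rightarrow> complex) \<Rightarrow> bool" where
  "jet_hol_zero m \<psi> \<longleftrightarrow> (\<forall>p\<le>m. \<psi> p = 0)"

end

theory Submission
  imports Defs
begin

text \<open>
  Pulling back the formal identity r = 2 Re h + \<Sum>|f_J|^2 - \<Sum>|g_J|^2 along
  the curve zeta, the pure terms of zeta^*r are those of zeta^*h, and its mixed coefficients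
  (t^p tbar^q, p, q \<ge> 1) equal \<Sum>_J (zeta^*f_J)_p conj((zeta^*f_J)_q) minus the same
  expression for g.  Since zeta vanishes to order nu, zeta^*f_J and zeta^*g_J vanish to order
  nu|J|.  Hence j_{2k nu}(zeta^*r) = 0 forces j_{2k nu}(zeta^*h) = 0 and says that the finitely
  many vectors ((zeta^*f_J)_p)_{|J| \<le> k} and ((zeta^*g_J)_p)_{|J| \<le> k}, p \<le> k nu, have the
  same Gram matrix.  Such families differ by a unitary matrix (built from Householder
  reflections), which we pad by the identity to an element of M_{1,N}.
\<close>

section \<open>Unitary matrices on a finite index set\<close>

text \<open>Vectors and matrices are functions on nat (resp. nat x nat); all operations below only
  look at the entries indexed by a fixed finite set I.  The Hermitian inner product on I:\<close>
definition inner_on :: "nat set \<Rightarrow> (nat \<Rightarrow> complex) \<Rightarrow> (nat \<Rightarrow> complex) \<Rightarrow> complex" where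
  "inner_on I v w = (\<Sum>i\<in>I. v i * cnj (w i))"

definition mv_on :: "nat set \<Rightarrow> imat \<Rightarrow> (nat \<Rightarrow> complex) \<Rightarrow> nat \<Rightarrow> complex" where
  "mv_on I A v i = (\<Sum>j\<in>I. A i j * v j)"

definition mm_on :: "nat set \<Rightarrow> imat \<Rightarrow> imat \<Rightarrow> imat" where
  "mm_on I A B i j = (\<Sum>l\<in>I. A i l * B l j)"

text \<open>A is unitary on I iff both A A^* = 1 and A^* A = 1, i.e. the rows of A and of A^* are
  orthonormal.\<close>
definition orthonormal_rows :: "nat set \<Rightarrow> imat \<Rightarrow> bool" where
  "orthonormal_rows I A \<longleftrightarrow>
     (\<forall>i\<in>I. \<forall>l\<in>I. inner_on I (A i) (A l) = (if i = l then 1 else 0))"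

definition unitary_on :: "nat set \<Rightarrow> imat \<Rightarrow> bool" where
  "unitary_on I A \<longleftrightarrow> orthonormal_rows I A \<and> orthonormal_rows I (adj A)"

lemma adj_adj [simp]: "adj (adj A) = A"
  by (simp add: adj_def fun_eq_iff)

lemma adj_mm_on: "adj (mm_on I A B) = mm_on I (adj B) (adj A)"
  by (simp add: adj_def mm_on_def fun_eq_iff mult.commute)

lemma inner_on_cong:
  "(\<And>i. i \<in> I \<Longrightarrow> v i = v' i) \<Longrightarrow> (\<And>i. i \<in> I \<Longrightarrow> w i = w' i) \<Longrightarrow>
   inner_on I v w = inner_on I v' w'"
  unfolding inner_on_def by simp

lemma mv_on_cong: "(\<And>i. i \<in> I \<Longrightarrow> v i = v' i) \<Longrightarrow> mv_on I A v j = mv_on I A v' j"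
  unfolding mv_on_def by simp

lemma inner_on_self_eq_0:
  assumes "finite I" and "inner_on I d d = 0" and "i \<in> I"
  shows "d i = 0"
proof -
  have "inner_on I d d = complex_of_real (\<Sum>j\<in>I. (cmod (d j))\<^sup>2)"
    unfolding inner_on_def of_real_sum by (simp only: complex_norm_square)
  with assms(2) have "(\<Sum>j\<in>I. (cmod (d j))\<^sup>2) = 0" by (metis of_real_eq_0_iff)
  with assms(1,3) show ?thesis by (simp add: sum_nonneg_eq_0_iff)
qed

text \<open>Coefficients with respect to an orthonormal family R determine inner products:
  this is the computation behind both products of unitary matrices and invariance of the
  inner product.\<close>
lemma inner_on_orthonormal_combination:
  assumes fin: "finite I"
    and orth: "\<And>a b. a \<in> I \<Longrightarrow> b \<in> I \<Longrightarrow> inner_on I (R a) (R b) = (if a = b then 1 else 0)"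
  shows "inner_on I (\<lambda>k. \<Sum>a\<in>I. x a * R a k) (\<lambda>k. \<Sum>b\<in>I. y b * R b k) = inner_on I x y"
proof -
  have "inner_on I (\<lambda>k. \<Sum>a\<in>I. x a * R a k) (\<lambda>k. \<Sum>b\<in>I. y b * R b k)
      = (\<Sum>k\<in>I. \<Sum>b\<in>I. \<Sum>a\<in>I. x a * cnj (y b) * (R a k * cnj (R b k)))"
    unfolding inner_on_def by (simp add: sum_distrib_left sum_distrib_right mult_ac)
  also have "\<dots> = (\<Sum>b\<in>I. \<Sum>a\<in>I. x a * cnj (y b) * inner_on I (R a) (R b))"
    unfolding inner_on_def sum_distrib_left
    by (subst sum.swap, rule sum.cong[OF refl], rule sum.swap)
  also have "\<dots> = (\<Sum>b\<in>I. x b * cnj (y b))"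
    by (intro sum.cong refl) (simp add: orth if_distrib fin cong: if_cong)
  finally show ?thesis unfolding inner_on_def .
qed

lemma orthonormal_rows_mm_on:
  assumes "finite I" and "orthonormal_rows I H" and "orthonormal_rows I A"
  shows "orthonormal_rows I (mm_on I H A)"
  using assms inner_on_orthonormal_combination[of I A "H _" "H _"]
  unfolding orthonormal_rows_def mm_on_def by (simp add: inner_on_def)

lemma unitary_on_mm_on:
  assumes "finite I" and "unitary_on I H" and "unitary_on I A"
  shows "unitary_on I (mm_on I H A)"
  using assms orthonormal_rows_mm_on unfolding unitary_on_def adj_mm_on by blast

lemma unitary_on_id:
  assumes "finite I"
  shows "unitary_on I (\<lambda>i j. if i = j then 1 else 0)"
proof -
  let ?E = "\<lambda>i j. if i = j then 1 else 0 :: complex"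
  have delta: "?E i j * cnj (?E l j) = (if j = i then ?E i l else 0)" for i l j
    by auto
  have "orthonormal_rows I ?E"
    using assms unfolding orthonormal_rows_def inner_on_def delta by (simp add: sum.delta)
  moreover have "adj ?E = ?E" by (auto simp: adj_def fun_eq_iff)
  ultimately show ?thesis unfolding unitary_on_def by simp
qed

lemma mv_on_mm_on: "mv_on I (mm_on I H A) v i = mv_on I H (mv_on I A v) i"
proof -
  have "mv_on I (mm_on I H A) v i = (\<Sum>j\<in>I. \<Sum>l\<in>I. H i l * (A l j * v j))"
    unfolding mv_on_def mm_on_def by (simp add: sum_distrib_right mult.assoc)
  also have "\<dots> = mv_on I H (mv_on I A v) i"
    unfolding mv_on_def by (subst sum.swap) (simp add: sum_distrib_left)
  finally show ?thesis .
qed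

lemma inner_on_unitary:
  assumes fin: "finite I" and A: "unitary_on I A"
  shows "inner_on I (mv_on I A v) (mv_on I A w) = inner_on I v w"
proof -
  have cols: "inner_on I (\<lambda>i. A i a) (\<lambda>i. A i b) = (if a = b then 1 else 0)"
    if "a \<in> I" "b \<in> I" for a b
  proof -
    have "inner_on I (\<lambda>i. A i a) (\<lambda>i. A i b) = inner_on I (adj A b) (adj A a)"
      unfolding inner_on_def adj_def by (simp add: mult.commute)
    with A that show ?thesis unfolding unitary_on_def orthonormal_rows_def by auto
  qed
  show ?thesis
    using inner_on_orthonormal_combination[of I "\<lambda>a i. A i a" v w, OF fin cols]
    unfolding mv_on_def by (simp add: mult.commute)
qed

text \<open>The rank-one perturbation 1 - beta d d^*, which is unitary when
  2 Re beta = |beta|^2 <d, d>; with d = x - y and beta = 1/<x, d> it is the reflection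
  exchanging two vectors x, y of equal length.\<close>
definition reflection :: "(nat \<Rightarrow> complex) \<Rightarrow> complex \<Rightarrow> imat" where
  "reflection d \<beta> i j = (if i = j then 1 else 0) - \<beta> * d i * cnj (d j)"

lemma adj_reflection: "adj (reflection d \<beta>) = reflection d (cnj \<beta>)"
  by (auto simp: adj_def reflection_def fun_eq_iff)

lemma mv_on_reflection:
  assumes "finite I" and "i \<in> I"
  shows "mv_on I (reflection d \<beta>) v i = v i - \<beta> * d i * inner_on I v d"
proof -
  have "mv_on I (reflection d \<beta>) v i
      = (\<Sum>j\<in>I. (if j = i then v j else 0) - \<beta> * d i * (v j * cnj (d j)))"
    unfolding mv_on_def by (rule sum.cong) (auto simp: reflection_def algebra_simps)
  also have "\<dots> = v i - \<beta> * d i * inner_on I v d"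
    using assms by (simp add: sum_subtractf inner_on_def sum_distrib_left)
  finally show ?thesis .
qed

lemma orthonormal_rows_reflection:
  assumes fin: "finite I" and cond: "\<beta> + cnj \<beta> = \<beta> * cnj \<beta> * inner_on I d d"
  shows "orthonormal_rows I (reflection d \<beta>)"
  unfolding orthonormal_rows_def
proof (intro ballI)
  fix i l assume i: "i \<in> I" and l: "l \<in> I"
  have "inner_on I (reflection d \<beta> i) (reflection d \<beta> l) =
      (\<Sum>k\<in>I. (if k = i then (if l = i then 1 else 0) else 0)
         - (if k = i then cnj \<beta> * cnj (d l) * d k else 0)
         - (if k = l then \<beta> * d i * cnj (d k) else 0)
         + \<beta> * cnj \<beta> * (d i * cnj (d l)) * (d k * cnj (d k)))"
    unfolding inner_on_def by (rule sum.cong) (auto simp: reflection_def algebra_simps)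
  also have "\<dots> = (if l = i then 1 else 0) - cnj \<beta> * cnj (d l) * d i - \<beta> * d i * cnj (d l)
         + \<beta> * cnj \<beta> * (d i * cnj (d l)) * inner_on I d d"
    using i l fin by (simp add: sum.distrib sum_subtractf inner_on_def sum_distrib_left)
  also have "\<dots> = (if i = l then 1 else 0)"
  proof -
    have key: "\<beta> * cnj \<beta> * X * inner_on I d d = (\<beta> + cnj \<beta>) * X" for X
      using cond by (simp add: mult_ac)
    show ?thesis unfolding key by (simp add: algebra_simps)
  qed
  finally show "inner_on I (reflection d \<beta> i) (reflection d \<beta> l) = (if i = l then 1 else 0)" .
qed

lemma householder:
  assumes fin: "finite I" and norms: "inner_on I x x = inner_on I y y"
  obtains H where "unitary_on I H" and "\<And>i. i \<in> I \<Longrightarrow> mv_on I H x i = y i"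
    and "\<And>v i. inner_on I v x = inner_on I v y \<Longrightarrow> i \<in> I \<Longrightarrow> mv_on I H v i = v i"
proof -
  define d where "d i = x i - y i" for i
  define \<alpha> where "\<alpha> = inner_on I x d"
  have inner_d: "inner_on I v d = inner_on I v x - inner_on I v y" for v
    unfolding inner_on_def d_def by (simp add: sum_subtractf algebra_simps)
  have dd: "inner_on I d d = \<alpha> + cnj \<alpha>"
  proof -
    have "inner_on I d d = \<alpha> + cnj \<alpha> + (inner_on I y y - inner_on I x x)"
      unfolding \<alpha>_def inner_on_def d_def
      by (simp add: sum.distrib[symmetric] sum_subtractf[symmetric] algebra_simps)
    with norms show ?thesis by simp
  qed
  define H where "H = reflection d (inverse \<alpha>)"
  have cond: "inverse \<alpha> + cnj (inverse \<alpha>) = inverse \<alpha> * cnj (inverse \<alpha>) * inner_on I d d"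
    by (cases "\<alpha> = 0") (simp_all add: dd field_simps)
  have "unitary_on I H"
    unfolding unitary_on_def H_def adj_reflection
    using orthonormal_rows_reflection[OF fin cond] orthonormal_rows_reflection[OF fin] cond
    by (simp add: add.commute mult.commute)
  moreover have "mv_on I H x i = y i" if i: "i \<in> I" for i
  proof (cases "\<alpha> = 0")
    case True
    \<comment> \<open>Degenerate case: then <d, d> = 0, so x = y and H is the identity.\<close>
    then have "d i = 0" using inner_on_self_eq_0[OF fin _ i] dd by simp
    with True show ?thesis unfolding H_def mv_on_reflection[OF fin i] by (simp add: d_def)
  next
    case False
    then show ?thesis unfolding H_def mv_on_reflection[OF fin i] \<alpha>_def[symmetric]
      by (simp add: d_def field_simps)
  qed
  moreover have "mv_on I H v i = v i" if "inner_on I v x = inner_on I v y" "i \<in> I" for v i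
    using that unfolding H_def mv_on_reflection[OF fin that(2)] inner_d by simp
  ultimately show ?thesis using that by blast
qed

text \<open>Two finite families of vectors with the same Gram matrix are related by a unitary
  map; it is built one vector at a time by composing Householder steps.\<close>
lemma unitary_of_equal_gram:
  fixes r :: nat
  assumes fin: "finite I"
    and gram: "\<And>p q. p < r \<Longrightarrow> q < r \<Longrightarrow> inner_on I (u p) (u q) = inner_on I (w p) (w q)"
  shows "\<exists>A. unitary_on I A \<and> (\<forall>p<r. \<forall>i\<in>I. mv_on I A (w p) i = u p i)"
  using gram
proof (induction r)
  case 0
  then show ?case using unitary_on_id[OF fin] by blast
next
  case (Suc r)
  have "\<exists>A. unitary_on I A \<and> (\<forall>p<r. \<forall>i\<in>I. mv_on I A (w p) i = u p i)"
    using Suc.prems by (intro Suc.IH) simp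
  then obtain A where A: "unitary_on I A"
    and Aw: "\<And>p i. p < r \<Longrightarrow> i \<in> I \<Longrightarrow> mv_on I A (w p) i = u p i"
    by blast
  have Aw_inner: "inner_on I (u p) v = inner_on I (mv_on I A (w p)) v" if "p < r" for p v
    by (rule inner_on_cong) (use Aw that in auto)
  define x where "x = mv_on I A (w r)"
  have "inner_on I x x = inner_on I (u r) (u r)"
    unfolding x_def inner_on_unitary[OF fin A] using Suc.prems[of r r] by simp
  with fin obtain H where H: "unitary_on I H" and Hx: "\<And>i. i \<in> I \<Longrightarrow> mv_on I H x i = u r i"
    and Hfix: "\<And>v i. inner_on I v x = inner_on I v (u r) \<Longrightarrow> i \<in> I \<Longrightarrow> mv_on I H v i = v i"
    by (rule householder) blast
  have Hu: "mv_on I H (u p) i = u p i" if "p < r" "i \<in> I" for p i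
  proof (rule Hfix[OF _ that(2)])
    show "inner_on I (u p) x = inner_on I (u p) (u r)"
      using Suc.prems[of p r] that(1)
      unfolding x_def Aw_inner[OF that(1)] inner_on_unitary[OF fin A] by simp
  qed
  have "mv_on I (mm_on I H A) (w p) i = u p i" if "p < Suc r" "i \<in> I" for p i
  proof (cases "p = r")
    case True
    then show ?thesis unfolding mv_on_mm_on using Hx[OF that(2)] by (simp add: x_def)
  next
    case False
    with that have "p < r" by simp
    have "mv_on I (mm_on I H A) (w p) i = mv_on I H (u p) i"
      unfolding mv_on_mm_on by (rule mv_on_cong) (use Aw \<open>p < r\<close> in auto)
    then show ?thesis using Hu[OF \<open>p < r\<close> that(2)] by simp
  qed
  then show ?case using unitary_on_mm_on[OF fin H A] by blast
qed

section \<open>Padding a finite unitary matrix to an infinite one\<close>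

definition pad :: "nat \<Rightarrow> imat \<Rightarrow> imat" where
  "pad N A i j = (if i \<in> {1..N} \<and> j \<in> {1..N} then A i j else if i = j then 1 else 0)"

lemma adj_pad: "adj (pad N A) = pad N (adj A)"
  unfolding adj_def pad_def by (auto simp: fun_eq_iff)

text \<open>The row products of a padded matrix are finite sums: within the block they are the
  inner products of rows of A, outside it the rows are standard basis vectors.\<close>
lemma pad_row_products:
  assumes "1 \<le> i" and "1 \<le> l"
  shows "(\<lambda>k. pad N A i (Suc k) * cnj (pad N A l (Suc k))) sums
           (if i \<in> {1..N} \<and> l \<in> {1..N} then inner_on {1..N} (A i) (A l)
            else if i = l then 1 else 0)"
proof (cases "i \<in> {1..N} \<and> l \<in> {1..N}")
  case True
  have "(\<lambda>k. pad N A i (Suc k) * cnj (pad N A l (Suc k))) sums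
          (\<Sum>k<N. pad N A i (Suc k) * cnj (pad N A l (Suc k)))"
    by (rule sums_finite) (use True in \<open>auto simp: pad_def\<close>)
  moreover have "(\<Sum>k<N. pad N A i (Suc k) * cnj (pad N A l (Suc k))) = inner_on {1..N} (A i) (A l)"
    using True by (simp add: inner_on_def sum.atLeast1_atMost_eq pad_def)
  ultimately show ?thesis using True by simp
next
  case False
  \<comment> \<open>One of the two rows is a standard basis vector, so only one term survives.\<close>
  have "pad N A i (Suc k) * cnj (pad N A l (Suc k)) =
          (if k = l - 1 then (if i = l then 1 else 0) else 0)" if "l \<notin> {1..N}" for k
    using that assms by (auto simp: pad_def)
  moreover have "pad N A i (Suc k) * cnj (pad N A l (Suc k)) =
          (if k = i - 1 then (if i = l then 1 else 0) else 0)" if "i \<notin> {1..N}" for k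
    using that assms by (auto simp: pad_def)
  ultimately show ?thesis using False sums_single by force
qed

lemma pad_M1N:
  assumes "unitary_on {1..N} A"
  shows "pad N A \<in> M1N N"
proof -
  have rows: "prod_entry_sums (pad N B) (adj (pad N B)) i l (if i = l then 1 else 0)"
    if "orthonormal_rows {1..N} B" "1 \<le> i" "1 \<le> l" for B i l
    using pad_row_products[OF that(2,3), of N B] that(1)
    unfolding prod_entry_sums_def orthonormal_rows_def adj_def by (simp split: if_splits)
  have "pad N A \<in> M1"
    unfolding M1_def
  proof (intro CollectI allI impI conjI)
    fix i l :: nat assume "1 \<le> i" "1 \<le> l"
    then show "prod_entry_sums (pad N A) (adj (pad N A)) i l (if i = l then 1 else 0)"
      and "prod_entry_sums (adj (pad N A)) (pad N A) i l (if i = l then 1 else 0)"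
      using rows[of A] rows[of "adj A"] assms unfolding unitary_on_def adj_pad by auto
  qed
  then show ?thesis unfolding M1N_def by (auto simp: pad_def)
qed

lemma matvec_pad:
  assumes "1 \<le> m"
  shows "matvec (pad N A) v m K =
           (if m \<in> {1..N} then (\<Sum>j\<in>{1..N}. A m j * v j K) else v m K)"
proof (cases "m \<in> {1..N}")
  case True
  have "matvec (pad N A) v m K = (\<Sum>\<^sub>\<infinity>j\<in>{1..N}. A m j * v j K)"
    unfolding matvec_def by (rule infsum_cong_neutral) (use True in \<open>auto simp: pad_def\<close>)
  then show ?thesis using True by simp
next
  case False
  have "matvec (pad N A) v m K = (\<Sum>\<^sub>\<infinity>j\<in>{m}. v j K)"
    unfolding matvec_def by (rule infsum_cong_neutral) (use assms False in \<open>auto simp: pad_def\<close>)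
  then show ?thesis using False by (simp del: atLeastAtMost_iff)
qed

section \<open>Multi-indices, their order and their enumeration\<close>

text \<open>Multi-indices of degree at most d; only these contribute to coefficients of order d
  of a pulled-back series.\<close>
abbreviation mi_upto :: "nat \<Rightarrow> nat \<Rightarrow> mindex set" where
  "mi_upto n d \<equiv> {J \<in> mi n. mdeg n J \<le> d}"

lemma finite_mi_upto: "finite (mi_upto n d)"
proof -
  let ?ext = "\<lambda>J' i. if i < n then J' i else (0::nat)"
  have "mi_upto n d \<subseteq> ?ext ` PiE {..<n} (\<lambda>_. {0..d})"
  proof
    fix J assume J: "J \<in> mi_upto n d"
    then have "J i \<le> d" if "i < n" for i
      using member_le_sum[of i "{..<n}" J] that unfolding mdeg_def by auto
    then have "restrict J {..<n} \<in> PiE {..<n} (\<lambda>_. {0..d})" by auto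
    moreover have "J = ?ext (restrict J {..<n})"
      using J by (auto simp: mi_def fun_eq_iff not_less)
    ultimately show "J \<in> ?ext ` PiE {..<n} (\<lambda>_. {0..d})" by blast
  qed
  then show ?thesis using finite_subset by (blast intro: finite_PiE)
qed

lemma zero_in_mi [simp]: "(\<lambda>_. 0) \<in> mi n"
  by (simp add: mi_def)

lemma mdeg_eq_0_iff: "J \<in> mi n \<Longrightarrow> mdeg n J = 0 \<longleftrightarrow> J = (\<lambda>_. 0)"
  unfolding mi_def mdeg_def by (auto simp: fun_eq_iff) (metis lessThan_iff not_le)

lemma mdeg_pos: "J \<in> nzmi n \<Longrightarrow> 1 \<le> mdeg n J"
  using mdeg_eq_0_iff[of J n] unfolding nzmi_def by (cases "mdeg n J") auto

lemma mi_less_irrefl: "\<not> mi_less n J J"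
  unfolding mi_less_def lex_less_def by auto

lemma lex_less_trans:
  assumes "lex_less n J K" and "lex_less n K L"
  shows "lex_less n J L"
proof -
  obtain i where i: "i < n" "\<forall>j<i. J j = K j" "J i < K i"
    using assms(1) unfolding lex_less_def by blast
  obtain i' where i': "i' < n" "\<forall>j<i'. K j = L j" "K i' < L i'"
    using assms(2) unfolding lex_less_def by blast
  \<comment> \<open>The first difference between J and L is at the smaller of i and i'.\<close>
  consider "i < i'" | "i = i'" | "i' < i" by linarith
  then show ?thesis
    unfolding lex_less_def using i i' by cases (auto intro!: exI[of _ "min i i'"])
qed

lemma mi_less_trans: "mi_less n J K \<Longrightarrow> mi_less n K L \<Longrightarrow> mi_less n J L"
  unfolding mi_less_def by (auto intro: lex_less_trans)

lemma mi_less_mdeg: "mi_less n J K \<Longrightarrow> mdeg n J \<le> mdeg n K"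
  unfolding mi_less_def by auto

lemma lex_less_total:
  assumes J: "J \<in> mi n" and K: "K \<in> mi n" and "J \<noteq> K"
  shows "lex_less n J K \<or> lex_less n K J"
proof -
  define i where "i = (LEAST i. J i \<noteq> K i)"
  have "\<exists>i. J i \<noteq> K i" using assms(3) by auto
  then have differ: "J i \<noteq> K i" unfolding i_def by (rule LeastI_ex)
  have before: "\<forall>j<i. J j = K j" unfolding i_def using not_less_Least by blast
  have "i < n"
  proof (rule ccontr)
    assume "\<not> i < n"
    then have "J i = 0" "K i = 0" using J K by (auto simp: mi_def)
    with differ show False by simp
  qed
  then show ?thesis unfolding lex_less_def using differ before by (metis linorder_neqE_nat)
qed

lemma mi_less_total:
  "J \<in> mi n \<Longrightarrow> K \<in> mi n \<Longrightarrow> J \<noteq> K \<Longrightarrow> mi_less n J K \<or> mi_less n K J"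
  unfolding mi_less_def using lex_less_total by (cases "mdeg n J" "mdeg n K" rule: linorder_cases) auto

text \<open>The rank of J is its number of nonzero predecessors; the enumeration J^(m) is
  the inverse of the rank (shifted by one).\<close>

definition preds :: "nat \<Rightarrow> mindex \<Rightarrow> mindex set" where
  "preds n J = {K \<in> nzmi n. mi_less n K J}"

definition mrank :: "nat \<Rightarrow> mindex \<Rightarrow> nat" where
  "mrank n J = card (preds n J)"

lemma finite_preds: "finite (preds n J)"
proof (rule finite_subset[OF _ finite_mi_upto])
  show "preds n J \<subseteq> mi_upto n (mdeg n J)"
    unfolding preds_def nzmi_def using mi_less_mdeg by auto
qed

lemma mrank_less: "K \<in> nzmi n \<Longrightarrow> mi_less n K J \<Longrightarrow> mrank n K < mrank n J"
  unfolding mrank_def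
proof (rule psubset_card_mono[OF finite_preds])
  assume "K \<in> nzmi n" "mi_less n K J"
  then have "preds n K \<subseteq> preds n J" and "K \<in> preds n J - preds n K"
    unfolding preds_def using mi_less_trans mi_less_irrefl by blast+
  then show "preds n K \<subset> preds n J" by blast
qed

lemma inj_on_mrank: "inj_on (mrank n) (nzmi n)"
proof (rule inj_onI, rule ccontr)
  fix J K assume "J \<in> nzmi n" "K \<in> nzmi n" "mrank n J = mrank n K" "J \<noteq> K"
  then show False
    using mi_less_total[of J n K] mrank_less[of J n K] mrank_less[of K n J] unfolding nzmi_def
    by auto
qed

lemma mrank_preds: "J \<in> nzmi n \<Longrightarrow> mrank n ` preds n J = {..<mrank n J}"
proof (rule card_subset_eq)
  assume "J \<in> nzmi n"
  show "mrank n ` preds n J \<subseteq> {..<mrank n J}"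
    using mrank_less unfolding preds_def by auto
  have "inj_on (mrank n) (preds n J)"
    using inj_on_mrank by (rule inj_on_subset) (auto simp: preds_def)
  from card_image[OF this] show "card (mrank n ` preds n J) = card {..<mrank n J}"
    by (simp add: mrank_def)
qed simp

lemma infinite_nzmi: "1 \<le> n \<Longrightarrow> infinite (nzmi n)"
proof
  assume "1 \<le> n" and fin: "finite (nzmi n)"
  let ?e = "\<lambda>d::nat. \<lambda>i::nat. if i = 0 then Suc d else 0"
  have "inj ?e" by (rule injI) (metis nat.inject)
  moreover have "range ?e \<subseteq> nzmi n"
    using \<open>1 \<le> n\<close> by (auto simp: nzmi_def mi_def fun_eq_iff)
  ultimately show False
    using finite_imageD[OF finite_subset[OF _ fin]] by auto
qed

lemma mrank_surj:
  assumes "1 \<le> n"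
  shows "\<exists>J\<in>nzmi n. mrank n J = r"
proof -
  have "infinite (mrank n ` nzmi n)"
    using infinite_nzmi[OF assms] inj_on_mrank finite_imageD by blast
  then obtain J where J: "J \<in> nzmi n" and "r < mrank n J"
    unfolding infinite_nat_iff_unbounded by blast
  then have "r \<in> mrank n ` preds n J" using mrank_preds by blast
  then show ?thesis by (auto simp: preds_def)
qed

lemma enum_spec:
  assumes "1 \<le> n"
  shows "enum n m \<in> nzmi n" and "mrank n (enum n m) = m - 1"
proof -
  have "\<exists>!J. J \<in> nzmi n \<and> mrank n J = m - 1"
    using mrank_surj[OF assms] inj_on_mrank by (metis inj_onD)
  moreover have "enum n m = (THE J. J \<in> nzmi n \<and> mrank n J = m - 1)"
    unfolding enum_def mrank_def preds_def ..
  ultimately show "enum n m \<in> nzmi n" "mrank n (enum n m) = m - 1"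
    using theI'[of "\<lambda>J. J \<in> nzmi n \<and> mrank n J = m - 1"] by simp_all
qed

definition low_indices :: "nat \<Rightarrow> nat \<Rightarrow> mindex set" where
  "low_indices n k = {J \<in> nzmi n. mdeg n J \<le> k}"

lemma finite_low_indices: "finite (low_indices n k)"
  using finite_mi_upto by (rule finite_subset[rotated]) (auto simp: low_indices_def nzmi_def)

lemma enum_low_indices:
  assumes n: "1 \<le> n"
  shows "bij_betw (enum n) {1..card (low_indices n k)} (low_indices n k)"
    and "card (low_indices n k) < m \<Longrightarrow> k < mdeg n (enum n m)"
proof -
  let ?T = "low_indices n k" and ?N = "card (low_indices n k)"
  have rank_low: "mrank n J < ?N" if "J \<in> ?T" for J
  proof -
    have "preds n J \<subseteq> ?T - {J}"
      using that mi_less_mdeg mi_less_irrefl unfolding preds_def low_indices_def by force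
    then have "mrank n J \<le> card (?T - {J})"
      unfolding mrank_def using finite_low_indices by (intro card_mono) auto
    also have "\<dots> < ?N" using that finite_low_indices by (meson card_Diff1_less)
    finally show ?thesis .
  qed
  have rank_high: "?N \<le> mrank n J" if "J \<in> nzmi n" "J \<notin> ?T" for J
  proof -
    have "?T \<subseteq> preds n J"
      using that unfolding preds_def low_indices_def mi_less_def by auto
    then show ?thesis unfolding mrank_def using finite_preds by (rule card_mono[rotated])
  qed
  have into: "enum n ` {1..?N} \<subseteq> ?T"
    using enum_spec[OF n] rank_high by fastforce
  have inj: "inj_on (enum n) {1..?N}"
  proof (rule inj_onI)
    fix x y assume "x \<in> {1..?N}" "y \<in> {1..?N}" "enum n x = enum n y"
    then show "x = y" using enum_spec(2)[OF n, of x] enum_spec(2)[OF n, of y] by auto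
  qed
  show "bij_betw (enum n) {1..?N} ?T"
    unfolding bij_betw_def
    using inj into card_image[OF inj] finite_low_indices by (simp add: card_subset_eq)
  show "k < mdeg n (enum n m)" if "?N < m"
    using that enum_spec[OF n, of m] rank_low unfolding low_indices_def by fastforce
qed

section \<open>Orders of vanishing along a formal curve\<close>

abbreviation zc :: "nat \<Rightarrow> (nat \<Rightarrow> complex fps) \<Rightarrow> mindex \<Rightarrow> nat \<Rightarrow> complex" where
  "zc n \<zeta> J p \<equiv> fps_nth (zpow n \<zeta> J) p"

lemma zpow_zero [simp]: "zpow n \<zeta> (\<lambda>_. 0) = 1"
  unfolding zpow_def by simp

lemma zc_below_order:
  assumes low: "\<forall>i<n. \<forall>m<d. fps_nth (\<zeta> i) m = 0" and p: "p < d * mdeg n J"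
  shows "zc n \<zeta> J p = 0"
proof (cases "zpow n \<zeta> J = 0")
  case False
  then have nonzero: "\<zeta> i ^ J i \<noteq> 0" if "i < n" for i
    using that unfolding zpow_def by auto
  have "J i * d \<le> subdegree (\<zeta> i ^ J i)" if "i < n" for i
  proof (cases "J i = 0")
    case False
    with nonzero[OF that] have "\<zeta> i \<noteq> 0" by auto
    then have "d \<le> subdegree (\<zeta> i)" using low that by (intro subdegree_geI) auto
    then show ?thesis by simp
  qed simp
  then have "d * mdeg n J \<le> (\<Sum>i<n. subdegree (\<zeta> i ^ J i))"
    unfolding mdeg_def sum_distrib_left by (intro sum_mono) (simp add: mult.commute)
  also have "\<dots> = subdegree (zpow n \<zeta> J)"
    unfolding zpow_def using nonzero by (intro subdegree_prod[symmetric]) simp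
  finally show ?thesis using p by (intro nth_less_subdegree_zero) simp
qed simp

lemma mdeg_le_if_zc_nonzero:
  assumes "\<forall>i<n. fps_nth (\<zeta> i) 0 = 0" and "zc n \<zeta> J p \<noteq> 0"
  shows "mdeg n J \<le> p"
proof (rule ccontr)
  assume "\<not> mdeg n J \<le> p"
  then have "zc n \<zeta> J p = 0" using assms(1) by (intro zc_below_order[where d = 1]) auto
  with assms(2) show False ..
qed

lemma nu_spec:
  assumes "\<forall>i<n. fps_nth (\<zeta> i) 0 = 0" and "\<exists>i<n. \<zeta> i \<noteq> 0"
  shows "1 \<le> nu n \<zeta>" and "\<forall>i<n. \<forall>m<nu n \<zeta>. fps_nth (\<zeta> i) m = 0"
proof -
  have "\<exists>m. \<exists>i<n. fps_nth (\<zeta> i) m \<noteq> 0"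
    using assms(2) by (metis fps_ext fps_zero_nth)
  then have "\<exists>i<n. fps_nth (\<zeta> i) (nu n \<zeta>) \<noteq> 0"
    unfolding nu_def by (rule LeastI_ex)
  then show "1 \<le> nu n \<zeta>" using assms(1) by (cases "nu n \<zeta>") auto
  show "\<forall>i<n. \<forall>m<nu n \<zeta>. fps_nth (\<zeta> i) m = 0"
    unfolding nu_def using not_less_Least by blast
qed

lemma pb_hol_upto:
  assumes zeta_0: "\<forall>i<n. fps_nth (\<zeta> i) 0 = 0" and "p \<le> B"
  shows "pb_hol n \<zeta> s p = (\<Sum>K\<in>mi_upto n B. s K * zc n \<zeta> K p)"
  unfolding pb_hol_def
proof (rule sum.mono_neutral_left[OF finite_mi_upto])
  show "\<forall>K\<in>mi_upto n B - mi_upto n p. s K * zc n \<zeta> K p = 0"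
    using mdeg_le_if_zc_nonzero[OF zeta_0] by auto
qed (use assms(2) in auto)

lemma pb_bi_upto:
  assumes zeta_0: "\<forall>i<n. fps_nth (\<zeta> i) 0 = 0" and "p \<le> B" and "q \<le> B"
  shows "pb_bi n \<zeta> \<phi> p q =
           (\<Sum>J\<in>mi_upto n B. \<Sum>K\<in>mi_upto n B. \<phi> J K * zc n \<zeta> J p * cnj (zc n \<zeta> K q))"
proof -
  have inner: "(\<Sum>K\<in>mi_upto n q. \<phi> J K * zc n \<zeta> J p * cnj (zc n \<zeta> K q)) =
      (\<Sum>K\<in>mi_upto n B. \<phi> J K * zc n \<zeta> J p * cnj (zc n \<zeta> K q))" for J
    by (rule sum.mono_neutral_left[OF finite_mi_upto]) (use assms mdeg_le_if_zc_nonzero[OF zeta_0] in auto)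
  have outer: "(\<Sum>K\<in>mi_upto n B. \<phi> J K * zc n \<zeta> J p * cnj (zc n \<zeta> K q)) = 0"
    if "J \<notin> mi_upto n p" "J \<in> mi n" for J
  proof -
    have "zc n \<zeta> J p = 0" using that mdeg_le_if_zc_nonzero[OF zeta_0, of J p] by auto
    then show ?thesis by simp
  qed
  show ?thesis
    unfolding pb_bi_def inner
    by (rule sum.mono_neutral_left[OF finite_mi_upto]) (use assms outer in auto)
qed

lemma pb_hol_diff: "pb_hol n \<zeta> (\<lambda>K. s K - t K) p = pb_hol n \<zeta> s p - pb_hol n \<zeta> t p"
  unfolding pb_hol_def by (simp add: left_diff_distrib sum_subtractf)

lemma pb_hol_lincomb:
  "pb_hol n \<zeta> (\<lambda>K. \<Sum>j\<in>I. x j * t j K) p = (\<Sum>j\<in>I. x j * pb_hol n \<zeta> (t j) p)"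
  unfolding pb_hol_def
  by (simp add: sum_distrib_left sum_distrib_right mult.assoc) (rule sum.swap)

section \<open>The Hermitian-square identity along the curve\<close>

lemma model_at_zero:
  "h (\<lambda>_. 0) = 0 \<Longrightarrow> model n h a J (\<lambda>_. 0) = h J"
  unfolding model_def re_bi_def conj_bi_def hol_bi_def aser_def by auto

lemma model_nonzero:
  "J \<noteq> (\<lambda>_. 0) \<Longrightarrow> K \<noteq> (\<lambda>_. 0) \<Longrightarrow> model n h a J K = 2 * (aser n a J K + cnj (aser n a K J))"
  unfolding model_def re_bi_def conj_bi_def hol_bi_def by simp

lemma pb_bi_pure_part:
  assumes expansion: "\<forall>J\<in>mi n. \<forall>K\<in>mi n. c J K = model n h a J K" and "h (\<lambda>_. 0) = 0"
  shows "pb_bi n \<zeta> c p 0 = pb_hol n \<zeta> h p"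
proof -
  have "mi_upto n 0 = {\<lambda>_. 0}" using mdeg_eq_0_iff by auto
  then show ?thesis
    unfolding pb_bi_def pb_hol_def using expansion model_at_zero[of h, OF assms(2)] by simp
qed

abbreviation pf :: "nat \<Rightarrow> (nat \<Rightarrow> complex fps) \<Rightarrow> (mindex \<Rightarrow> mindex \<Rightarrow> complex) \<Rightarrow> mindex \<Rightarrow> nat \<Rightarrow> complex" where
  "pf n \<zeta> a J p \<equiv> pb_hol n \<zeta> (fser n a J) p"

abbreviation pg :: "nat \<Rightarrow> (nat \<Rightarrow> complex fps) \<Rightarrow> (mindex \<Rightarrow> mindex \<Rightarrow> complex) \<Rightarrow> mindex \<Rightarrow> nat \<Rightarrow> complex" where
  "pg n \<zeta> a J p \<equiv> pb_hol n \<zeta> (gser n a J) p"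

text \<open>f_J and g_J only involve monomials z^K with K \<ge> J, so zeta^*f_J and zeta^*g_J
  vanish to order nu |J|.\<close>
lemma pf_pg_below_order:
  assumes low: "\<forall>i<n. \<forall>m<d. fps_nth (\<zeta> i) m = 0" and p: "p < d * mdeg n J"
  shows "pf n \<zeta> a J p = 0" and "pg n \<zeta> a J p = 0"
proof -
  have vanish: "zc n \<zeta> K p = 0" if "K = J \<or> mi_le n J K" for K
  proof (rule zc_below_order[OF low])
    have "mdeg n J \<le> mdeg n K" using that mi_less_mdeg unfolding mi_le_def by auto
    then show "p < d * mdeg n K" using p by (meson less_le_trans mult_le_mono2)
  qed
  have f: "fser n a J K * zc n \<zeta> K p = 0" and g: "gser n a J K * zc n \<zeta> K p = 0" for K
    using vanish[of K] unfolding fser_def gser_def by auto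
  show "pf n \<zeta> a J p = 0" and "pg n \<zeta> a J p = 0"
    unfolding pb_hol_def f g by simp_all
qed

lemma pf_pg_high_degree:
  assumes low: "\<forall>i<n. \<forall>m<\<nu>. fps_nth (\<zeta> i) m = 0" and "1 \<le> \<nu>"
    and "k < mdeg n J" and "p \<le> k * \<nu>"
  shows "pf n \<zeta> a J p = 0" and "pg n \<zeta> a J p = 0"
proof -
  have "\<nu> * Suc k \<le> \<nu> * mdeg n J" using assms(3) by (intro mult_le_mono2) simp
  then have "p < \<nu> * mdeg n J" using assms(2,4) by (simp add: mult.commute)
  then show "pf n \<zeta> a J p = 0" and "pg n \<zeta> a J p = 0" using pf_pg_below_order[OF low] by simp_all
qed

lemma pf_pg_split:
  fixes a :: "mindex \<Rightarrow> mindex \<Rightarrow> complex"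
  assumes zeta_0: "\<forall>i<n. fps_nth (\<zeta> i) 0 = 0"
    and J: "J \<in> mi_upto n B" "J \<noteq> (\<lambda>_. 0)" and p: "p \<le> B"
  defines "S \<equiv> (\<Sum>K\<in>mi_upto n B. cnj (aser n a J K) * zc n \<zeta> K p)"
  shows "pf n \<zeta> a J p = zc n \<zeta> J p + S" and "pg n \<zeta> a J p = zc n \<zeta> J p - S"
proof -
  have f_eq: "fser n a J K * zc n \<zeta> K p =
      (if K = J then zc n \<zeta> K p else 0) + cnj (aser n a J K) * zc n \<zeta> K p"
    and g_eq: "gser n a J K * zc n \<zeta> K p =
      (if K = J then zc n \<zeta> K p else 0) - cnj (aser n a J K) * zc n \<zeta> K p" for K
    using J unfolding fser_def gser_def aser_def by (auto simp: algebra_simps)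
  show "pf n \<zeta> a J p = zc n \<zeta> J p + S" and "pg n \<zeta> a J p = zc n \<zeta> J p - S"
    unfolding pb_hol_upto[OF zeta_0 p] S_def f_eq g_eq using J finite_mi_upto
    by (simp_all add: sum.distrib sum_subtractf)
qed

text \<open>Pulled back along zeta, the identity r = 2 Re h + sum |f_J|^2 - sum |g_J|^2 holds
  coefficientwise: the mixed coefficients of zeta^*r are those of the Hermitian squares.\<close>
lemma pb_bi_hermitian_squares:
  fixes a :: "mindex \<Rightarrow> mindex \<Rightarrow> complex"
  assumes zeta_0: "\<forall>i<n. fps_nth (\<zeta> i) 0 = 0"
    and expansion: "\<forall>J\<in>mi n. \<forall>K\<in>mi n. c J K = model n h a J K"
    and pq: "1 \<le> p" "1 \<le> q" "p \<le> B" "q \<le> B"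
  shows "pb_bi n \<zeta> c p q = (\<Sum>J\<in>mi_upto n B - {\<lambda>_. 0}.
           pf n \<zeta> a J p * cnj (pf n \<zeta> a J q) - pg n \<zeta> a J p * cnj (pg n \<zeta> a J q))"
proof -
  let ?S = "mi_upto n B" and ?Z = "zc n \<zeta>"
  define X where "X J = (\<Sum>K\<in>?S. aser n a J K * ?Z J p * cnj (?Z K q)) +
      (\<Sum>K\<in>?S. cnj (aser n a J K) * ?Z K p * cnj (?Z J q))" for J
  have square_diff: "pf n \<zeta> a J p * cnj (pf n \<zeta> a J q) - pg n \<zeta> a J p * cnj (pg n \<zeta> a J q) = 2 * X J"
    if J: "J \<in> ?S - {\<lambda>_. 0}" for J
  proof -
    define A where "A r = (\<Sum>K\<in>?S. cnj (aser n a J K) * ?Z K r)" for r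
    have "(?Z J p + A p) * cnj (?Z J q + A q) - (?Z J p - A p) * cnj (?Z J q - A q)
        = 2 * (?Z J p * cnj (A q) + A p * cnj (?Z J q))"
      by (simp add: algebra_simps)
    moreover have "?Z J p * cnj (A q) = (\<Sum>K\<in>?S. aser n a J K * ?Z J p * cnj (?Z K q))"
      and "A p * cnj (?Z J q) = (\<Sum>K\<in>?S. cnj (aser n a J K) * ?Z K p * cnj (?Z J q))"
      unfolding A_def by (simp_all add: sum_distrib_left sum_distrib_right mult_ac)
    ultimately show ?thesis
      using J pf_pg_split[OF zeta_0 _ _ pq(3), of J a] pf_pg_split[OF zeta_0 _ _ pq(4), of J a]
      unfolding X_def A_def by auto
  qed
  have "(\<Sum>J\<in>?S - {\<lambda>_. 0}. pf n \<zeta> a J p * cnj (pf n \<zeta> a J q) - pg n \<zeta> a J p * cnj (pg n \<zeta> a J q))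
      = (\<Sum>J\<in>?S - {\<lambda>_. 0}. 2 * X J)"
    using square_diff by simp
  also have "\<dots> = (\<Sum>J\<in>?S. 2 * X J)"
    by (rule sum.mono_neutral_left) (auto simp: X_def aser_def finite_mi_upto)
  also have "\<dots> = 2 * (\<Sum>J\<in>?S. \<Sum>K\<in>?S. aser n a J K * ?Z J p * cnj (?Z K q)) +
      2 * (\<Sum>J\<in>?S. \<Sum>K\<in>?S. cnj (aser n a J K) * ?Z K p * cnj (?Z J q))"
    unfolding X_def by (simp add: sum.distrib sum_distrib_left)
  also have "(\<Sum>J\<in>?S. \<Sum>K\<in>?S. cnj (aser n a J K) * ?Z K p * cnj (?Z J q)) =
      (\<Sum>J\<in>?S. \<Sum>K\<in>?S. cnj (aser n a K J) * ?Z J p * cnj (?Z K q))"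
    by (rule sum.swap)
  also have "2 * (\<Sum>J\<in>?S. \<Sum>K\<in>?S. aser n a J K * ?Z J p * cnj (?Z K q)) +
      2 * (\<Sum>J\<in>?S. \<Sum>K\<in>?S. cnj (aser n a K J) * ?Z J p * cnj (?Z K q)) =
      (\<Sum>J\<in>?S. \<Sum>K\<in>?S. 2 * (aser n a J K + cnj (aser n a K J)) * ?Z J p * cnj (?Z K q))"
    by (simp add: sum.distrib sum_distrib_left algebra_simps)
  also have "\<dots> = (\<Sum>J\<in>?S. \<Sum>K\<in>?S. c J K * ?Z J p * cnj (?Z K q))"
  proof (intro sum.cong refl)
    fix J K assume "J \<in> ?S" "K \<in> ?S"
    \<comment> \<open>Terms with J = 0 or K = 0 drop out since the constant monomial has no t^p, p > 0.\<close>
    then show "2 * (aser n a J K + cnj (aser n a K J)) * ?Z J p * cnj (?Z K q) = c J K * ?Z J p * cnj (?Z K q)"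
      using expansion model_nonzero[of J K n h a] pq(1,2) by (cases "J = (\<lambda>_. 0) \<or> K = (\<lambda>_. 0)") auto
  qed
  also have "\<dots> = pb_bi n \<zeta> c p q" using pb_bi_upto[OF zeta_0 pq(3,4)] by simp
  finally show ?thesis ..
qed

section \<open>The Gram equality and the unitary matching\<close>

lemma gram_low_indices:
  fixes a :: "mindex \<Rightarrow> mindex \<Rightarrow> complex"
  assumes zeta_0: "\<forall>i<n. fps_nth (\<zeta> i) 0 = 0"
    and expansion: "\<forall>J\<in>mi n. \<forall>K\<in>mi n. c J K = model n h a J K"
    and low: "\<forall>i<n. \<forall>m<\<nu>. fps_nth (\<zeta> i) m = 0" and \<nu>: "1 \<le> \<nu>"
    and jet: "jet_bi_zero (2 * k * \<nu>) (pb_bi n \<zeta> c)"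
    and pq: "p \<le> k * \<nu>" "q \<le> k * \<nu>"
  shows "(\<Sum>J\<in>low_indices n k. pf n \<zeta> a J p * cnj (pf n \<zeta> a J q)) =
         (\<Sum>J\<in>low_indices n k. pg n \<zeta> a J p * cnj (pg n \<zeta> a J q))"
proof (cases "p = 0 \<or> q = 0")
  case True
  have "pf n \<zeta> a J 0 = 0 \<and> pg n \<zeta> a J 0 = 0" if "J \<in> low_indices n k" for J
  proof -
    have "1 \<le> mdeg n J" using that mdeg_pos unfolding low_indices_def by auto
    with \<nu> have "0 < \<nu> * mdeg n J" by simp
    then show ?thesis using pf_pg_below_order[OF low] by blast
  qed
  with True show ?thesis by (auto intro!: sum.cong)
next
  case False
  let ?B = "2 * k * \<nu>"
  let ?d = "\<lambda>J. pf n \<zeta> a J p * cnj (pf n \<zeta> a J q) - pg n \<zeta> a J p * cnj (pg n \<zeta> a J q)"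
  have high_vanish: "?d J = 0" if "J \<in> mi_upto n ?B - {\<lambda>_. 0} - low_indices n k" for J
  proof -
    have "k < mdeg n J" using that unfolding low_indices_def nzmi_def by auto
    then show ?thesis using pf_pg_high_degree[OF low \<nu> _ pq(1)] by simp
  qed
  have kB: "k \<le> ?B" using \<nu> mult_le_mono2[of 1 \<nu> "2 * k"] by simp
  have "low_indices n k \<subseteq> mi_upto n ?B - {\<lambda>_. 0}"
    unfolding low_indices_def nzmi_def by (auto dest: order_trans[OF _ kB])
  then have "(\<Sum>J\<in>low_indices n k. ?d J) = (\<Sum>J\<in>mi_upto n ?B - {\<lambda>_. 0}. ?d J)"
    using high_vanish by (intro sum.mono_neutral_left) (auto simp: finite_mi_upto)
  also have "\<dots> = pb_bi n \<zeta> c p q"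
    using False pq by (intro pb_bi_hermitian_squares[symmetric, OF zeta_0 expansion]) auto
  also have "\<dots> = 0" using jet pq unfolding jet_bi_zero_def by simp
  finally show ?thesis by (simp add: sum_subtractf)
qed

lemma unitary_matching_low_indices:
  fixes a :: "mindex \<Rightarrow> mindex \<Rightarrow> complex" and D :: nat
  assumes n: "1 \<le> n"
    and gram: "\<And>p q. p \<le> D \<Longrightarrow> q \<le> D \<Longrightarrow>
      (\<Sum>J\<in>low_indices n k. pf n \<zeta> a J p * cnj (pf n \<zeta> a J q)) =
      (\<Sum>J\<in>low_indices n k. pg n \<zeta> a J p * cnj (pg n \<zeta> a J q))"
  defines "I \<equiv> {1..card (low_indices n k)}"
  shows "\<exists>A. unitary_on I A \<and>
    (\<forall>m\<in>I. \<forall>p\<le>D. mv_on I A (\<lambda>j. pg n \<zeta> a (enum n j) p) m = pf n \<zeta> a (enum n m) p)"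
proof -
  define u where "u p j = pf n \<zeta> a (enum n j) p" for p j
  define w where "w p j = pg n \<zeta> a (enum n j) p" for p j
  have reindex: "(\<Sum>j\<in>I. g (enum n j)) = (\<Sum>J\<in>low_indices n k. g J)" for g :: "mindex \<Rightarrow> complex"
    unfolding I_def by (rule sum.reindex_bij_betw[OF enum_low_indices(1)[OF n]])
  have "inner_on I (u p) (u q) = inner_on I (w p) (w q)" if "p < Suc D" "q < Suc D" for p q
    using gram[of p q] that reindex[of "\<lambda>J. pf n \<zeta> a J p * cnj (pf n \<zeta> a J q)"]
      reindex[of "\<lambda>J. pg n \<zeta> a J p * cnj (pg n \<zeta> a J q)"]
    unfolding inner_on_def u_def w_def by simp
  then obtain A where "unitary_on I A" "\<forall>p<Suc D. \<forall>m\<in>I. mv_on I A (w p) m = u p m"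
    using unitary_of_equal_gram[of I "Suc D" u w] unfolding I_def by auto
  then show ?thesis unfolding u_def w_def by auto
qed

lemma pb_residual_pad:
  assumes "1 \<le> m"
  shows "pb_hol n \<zeta> (\<lambda>K. fvec n a m K - matvec (pad N A) (gvec n a) m K) p =
    pf n \<zeta> a (enum n m) p -
      (if m \<in> {1..N} then mv_on {1..N} A (\<lambda>j. pg n \<zeta> a (enum n j) p) m else pg n \<zeta> a (enum n m) p)"
proof (cases "m \<in> {1..N}")
  case True
  then show ?thesis
    unfolding matvec_pad[OF assms] pb_hol_diff by (simp add: pb_hol_lincomb mv_on_def fvec_def gvec_def)
next
  case False
  then show ?thesis
    unfolding matvec_pad[OF assms] pb_hol_diff by (simp add: fvec_def gvec_def del: atLeastAtMost_iff)
qed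

theorem mainTheorem3:
  fixes n :: nat
    and c :: biser
    and h :: holser
    and a :: "mindex \<Rightarrow> mindex \<Rightarrow> complex"
    and \<zeta> :: "nat \<Rightarrow> complex fps"
    and k :: nat
  assumes r_real: "\<forall>J\<in>mi n. \<forall>K\<in>mi n. c K J = cnj (c J K)"
    and r_0: "c (\<lambda>_. 0) (\<lambda>_. 0) = 0"
    and dr_0: "\<exists>J\<in>mi n. mdeg n J = 1 \<and> c J (\<lambda>_. 0) \<noteq> 0"
    and h_0: "h (\<lambda>_. 0) = 0"
    and expansion: "\<forall>J\<in>mi n. \<forall>K\<in>mi n. c J K = model n h a J K"
    and zeta_0: "\<forall>i<n. fps_nth (\<zeta> i) 0 = 0"
    and zeta_nonconst: "\<exists>i<n. \<zeta> i \<noteq> 0"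
    and k_pos: "k \<ge> 1"
    and jet_r: "jet_bi_zero (2 * k * nu n \<zeta>) (pb_bi n \<zeta> c)"
  shows "\<exists>N. \<exists>U \<in> M1N N.
           jet_hol_zero (2 * k * nu n \<zeta>) (pb_hol n \<zeta> h) \<and>
           (\<forall>m\<ge>1. jet_hol_zero (k * nu n \<zeta>)
                     (pb_hol n \<zeta> (\<lambda>K. fvec n a m K - matvec U (gvec n a) m K)))"
proof -
  have n: "1 \<le> n" using dr_0 by (cases n) (auto simp: mdeg_def)
  define \<nu> where "\<nu> = nu n \<zeta>"
  have \<nu>: "1 \<le> \<nu>" and low: "\<forall>i<n. \<forall>m<\<nu>. fps_nth (\<zeta> i) m = 0"
    using nu_spec[OF zeta_0 zeta_nonconst] unfolding \<nu>_def by auto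
  have h_jet: "jet_hol_zero (2 * k * \<nu>) (pb_hol n \<zeta> h)"
    using jet_r unfolding jet_hol_zero_def jet_bi_zero_def \<nu>_def pb_bi_pure_part[OF expansion h_0, symmetric]
    by simp
  have gram: "(\<Sum>J\<in>low_indices n k. pf n \<zeta> a J p * cnj (pf n \<zeta> a J q)) =
      (\<Sum>J\<in>low_indices n k. pg n \<zeta> a J p * cnj (pg n \<zeta> a J q))"
    if "p \<le> k * \<nu>" "q \<le> k * \<nu>" for p q
    using gram_low_indices[OF zeta_0 expansion low \<nu>] jet_r that unfolding \<nu>_def by blast
  define N where "N = card (low_indices n k)"
  obtain A where A: "unitary_on {1..N} A" and match: "\<And>m p. m \<in> {1..N} \<Longrightarrow> p \<le> k * \<nu> \<Longrightarrow>
      mv_on {1..N} A (\<lambda>j. pg n \<zeta> a (enum n j) p) m = pf n \<zeta> a (enum n m) p"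
    using unitary_matching_low_indices[OF n gram] unfolding N_def by blast
  have "pb_hol n \<zeta> (\<lambda>K. fvec n a m K - matvec (pad N A) (gvec n a) m K) p = 0"
    if m: "1 \<le> m" and p: "p \<le> k * \<nu>" for m p
  proof (cases "m \<in> {1..N}")
    case False
    \<comment> \<open>Beyond the first N indices, |J^(m)| > k and f_{J^(m)}, g_{J^(m)} vanish to order > k nu.\<close>
    then have "k < mdeg n (enum n m)" using m enum_low_indices(2)[OF n] unfolding N_def by auto
    then show ?thesis using False pb_residual_pad[OF m] pf_pg_high_degree[OF low \<nu> _ p]
      by (simp del: atLeastAtMost_iff)
  qed (use match pb_residual_pad[OF m] p in simp)
  then show ?thesis using pad_M1N[OF A] h_jet unfolding jet_hol_zero_def \<nu>_def by blast
qed

end
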